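(* Let $N=\{1,\ldots,n\}$, let $v$ be a vertex of $\mathscr{BG}_+(n)$, and let $\mathscr{D}=\{S: \varnothing\neq S\subsetneq N,\ v(S)=1\}$ be its associated collection. If $\mathscr{D}\neq\varnothing$, then \[ C(v)=\mathrm{conv}\{\mathbf{1}^{\{i\}}: i\in\textstyle\bigcap\mathscr{D}\}, \] so that the dimension of the core of $v$ is $|\bigcap\mathscr{D}|-1$. If $\mathscr{D}=\varnothing$, then $v=u_N$, whose core is the simplex $\{x\in\mathbb{R}^N_+:\sum_{i\in N}x_i=1\}$.
   Context: A game on $N$ is a map $v:2^N\to\mathbb{R}$ with $v(\varnothing)=0$. $u_N$ is the game with $u_N(N)=1$ and $u_N(S)=0$ for $S\neq N$. $\mathbf{1}^{\{i\}}\in\mathbb{R}^N$ is the $i$-th unit vector. The core is $C(v)=\{x\in\mathbb{R}^N: \sum_{i\in S}x_i\geqslant v(S)\ \forall S,\ \sum_{i\in N}x_i=v(N)\}$. $\mathscr{BG}_+(n)$ is the polytope (in $\mathbb{R}^{2^N\setminus\{\varnothing,N\}}$) of games $v$ with $v\geqslant 0$, $v(N)=1$ and $C(v)\neq\varnothing$. *)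

theory Defs
  imports "HOL-Analysis.Analysis"
begin

text \<open>Player set N is the finite type 'n (N = UNIV). A game is v :: 'n set => real
  with v {} = 0. Payoff vectors live in real^'n.\<close>

definition is_game :: "('n set \<Rightarrow> real) \<Rightarrow> bool" where
  "is_game v \<longleftrightarrow> v {} = 0"

definition unanimity_N :: "'n::finite set \<Rightarrow> real" where
  "unanimity_N S = (if S = UNIV then 1 else 0)"

definition core :: "('n::finite set \<Rightarrow> real) \<Rightarrow> (real ^ 'n) set" where
  "core v = {x. (\<forall>S. (\<Sum>i\<in>S. x $ i) \<ge> v S) \<and> (\<Sum>i\<in>UNIV. x $ i) = v UNIV}"

text \<open>BG_+(n): games v \<ge> 0 with v(N) = 1 and nonempty core. The coordinates of the
  polytope are the proper nonempty coalitions; v {} = 0 and v N = 1 are fixed.\<close>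
definition BGplus :: "('n::finite set \<Rightarrow> real) set" where
  "BGplus = {v. is_game v \<and> (\<forall>S. v S \<ge> 0) \<and> v UNIV = 1 \<and> core v \<noteq> {}}"

text \<open>Vertex = extreme point of the polytope. Since all members agree on {} and N,
  this is the extreme-point notion in the coordinates indexed by proper nonempty coalitions.\<close>
definition vertex_BGplus :: "('n::finite set \<Rightarrow> real) \<Rightarrow> bool" where
  "vertex_BGplus v \<longleftrightarrow> v \<in> BGplus \<and>
     (\<forall>a\<in>BGplus. \<forall>b\<in>BGplus. \<forall>t::real. 0 < t \<and> t < 1 \<and>
        v = (\<lambda>S. (1 - t) * a S + t * b S) \<longrightarrow> a = b)"

definition assoc_coll :: "('n::finite set \<Rightarrow> real) \<Rightarrow> 'n set set" where
  "assoc_coll v = {S. S \<noteq> {} \<and> S \<noteq> UNIV \<and> v S = 1}"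

end

theory Submission
  imports Defs
begin

text \<open>Let x be a core element of a game v in BG+ with 0 < x_i < 1 (if x_i = 1, then v(S) <= x(S)
  = 0 for every S not containing i). Put w(S) = v(S)/x(S) for coalitions S containing i and
  w(S) = 0 otherwise. Then v = x_i w + (1 - x_i) u, where i is a veto player of w (so the
  unit vector of i lies in the core of w), and the core of u contains x with its i-th
  coordinate deleted and the rest renormalised. At a vertex this forces v = w, so v has a
  veto player. A game with a veto player can be pushed up and down at any coalition whose
  worth lies strictly between 0 and 1, so a vertex is 0/1-valued; and the core of a
  0/1-valued game is the face of the standard simplex spanned by the players belonging to
  every coalition of worth 1.\<close>

lemma sum_axis: "(\<Sum>j\<in>S. axis i (1::real) $ j) = (if i \<in> S then 1 else 0)"
  by (simp add: axis_def sum.delta' [of S i "\<lambda>_. 1::real", simplified] cong: if_cong)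

lemma convex_hull_axes:
  "convex hull {axis i (1::real) | i. i \<in> I} =
     {x :: real ^ 'n::finite. (\<forall>i. 0 \<le> x $ i) \<and> (\<forall>i. i \<notin> I \<longrightarrow> x $ i = 0) \<and> (\<Sum>i\<in>UNIV. x $ i) = 1}"
  (is "_ = ?face")
proof
  have "convex ?face"
    by (auto simp: convex_def sum.distrib simp flip: sum_distrib_left)
  then show "convex hull {axis i 1 | i. i \<in> I} \<subseteq> ?face"
    by (rule hull_minimal[rotated]) (auto simp: axis_def)
next
  show "?face \<subseteq> convex hull {axis i 1 | i. i \<in> I}"
  proof
    fix x :: "real ^ 'n" assume x: "x \<in> ?face"
    have "(\<Sum>j\<in>I. x $ j) = 1"
      using x sum.mono_neutral_right[of UNIV I "\<lambda>j. x $ j"] by auto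
    have "x = (\<Sum>j\<in>I. x $ j *\<^sub>R axis j 1)"
      using x by (auto simp: vec_eq_iff axis_def if_distrib sum.delta cong: if_cong)
    also have "\<dots> \<in> convex hull {axis i 1 | i. i \<in> I}"
      using x \<open>(\<Sum>j\<in>I. x $ j) = 1\<close> by (intro convex_sum) (auto intro: hull_inc)
    finally show "x \<in> convex hull {axis i 1 | i. i \<in> I}" .
  qed
qed

lemma aff_dim_convex_hull_axes:
  "aff_dim (convex hull {axis i (1::real) | i. i \<in> I}) = int (card I) - 1"
proof -
  have axes: "{axis i (1::real) | i. i \<in> I} = (\<lambda>i. axis i 1) ` I" by blast
  have "independent {axis i (1::real) | i. i \<in> I}"
    by (rule independent_mono[OF independent_Basis]) auto
  then have "\<not> affine_dependent {axis i (1::real) | i. i \<in> I}"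
    using affine_dependent_imp_dependent by blast
  moreover have "card {axis i (1::real) | i. i \<in> I} = card I"
    unfolding axes by (rule card_image) (auto simp: inj_on_def axis_eq_axis)
  ultimately show ?thesis
    using aff_dim_affine_independent[of "{axis i (1::real) | i. i \<in> I}"] by (simp add: aff_dim_convex_hull)
qed

lemma core_le_sum: "x \<in> core v \<Longrightarrow> v S \<le> (\<Sum>j\<in>S. x $ j)"
  by (simp add: core_def)

lemma core_sum_UNIV: "x \<in> core v \<Longrightarrow> (\<Sum>j\<in>UNIV. x $ j) = v UNIV"
  by (simp add: core_def)

lemma core_nonneg: "x \<in> core v \<Longrightarrow> 0 \<le> v {j} \<Longrightarrow> 0 \<le> x $ j"
  using core_le_sum[of x v "{j}"] by simp

lemma core_sum_mono:
  assumes "x \<in> core v" "\<forall>S. 0 \<le> v S" "S \<subseteq> T"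
  shows "(\<Sum>j\<in>S. x $ j) \<le> (\<Sum>j\<in>T. x $ j)"
  using assms by (intro sum_mono2) (auto intro: core_nonneg)

lemma core_add_sum_le:
  assumes "x \<in> core v" "\<forall>S. 0 \<le> v S" "i \<notin> S"
  shows "x $ i + (\<Sum>j\<in>S. x $ j) \<le> v UNIV"
  using core_sum_mono[OF assms(1,2), of "insert i S" UNIV] core_sum_UNIV[OF assms(1)] assms(3)
  by simp

lemma BGplus_le_1:
  assumes "v \<in> BGplus" shows "v S \<le> 1"
proof -
  obtain x where x: "x \<in> core v" "\<forall>S. 0 \<le> v S" "v UNIV = 1"
    using assms unfolding BGplus_def by auto
  then show ?thesis
    using core_le_sum[OF x(1), of S] core_sum_mono[OF x(1,2), of S UNIV] core_sum_UNIV[OF x(1)]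
    by auto
qed

definition veto_player :: "('n set \<Rightarrow> real) \<Rightarrow> 'n \<Rightarrow> bool" where
  "veto_player v i \<longleftrightarrow> (\<forall>S. i \<notin> S \<longrightarrow> v S = 0)"

lemma veto_game_in_BGplus:
  assumes "is_game v" "\<forall>S. 0 \<le> v S \<and> v S \<le> 1" "v UNIV = 1" "veto_player v i"
  shows "v \<in> BGplus"
proof -
  have "axis i 1 \<in> core v"
    using assms unfolding core_def veto_player_def by (auto simp: sum_axis)
  then show ?thesis using assms unfolding BGplus_def by auto
qed

lemma vertex_BGplus_convex_combination:
  assumes "vertex_BGplus v" "a \<in> BGplus" "b \<in> BGplus" "0 < t" "t < 1"
    and "v = (\<lambda>S. (1 - t) * a S + t * b S)"
  shows "a = b"
  using assms unfolding vertex_BGplus_def by blast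

definition veto_component :: "('n::finite set \<Rightarrow> real) \<Rightarrow> real ^ 'n \<Rightarrow> 'n \<Rightarrow> 'n set \<Rightarrow> real" where
  "veto_component v x i S = (if i \<in> S then v S / (\<Sum>j\<in>S. x $ j) else 0)"

definition residual_game :: "('n::finite set \<Rightarrow> real) \<Rightarrow> real ^ 'n \<Rightarrow> 'n \<Rightarrow> 'n set \<Rightarrow> real" where
  "residual_game v x i S = (v S - x $ i * veto_component v x i S) / (1 - x $ i)"

lemma veto_component_bounds:
  assumes "v \<in> BGplus" "x \<in> core v" "0 < x $ i"
  shows "0 \<le> veto_component v x i S" "veto_component v x i S \<le> 1"
    and "x $ i * veto_component v x i S \<le> v S"
    and "v S - x $ i * veto_component v x i S \<le> (\<Sum>j\<in>S. x $ j) - (if i \<in> S then x $ i else 0)"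
proof -
  let ?w = "veto_component v x i S" and ?s = "\<Sum>j\<in>S. x $ j"
  have v: "0 \<le> v S" using assms(1) unfolding BGplus_def by auto
  have vs: "v S \<le> ?s" using core_le_sum[OF assms(2)] .
  have "0 \<le> ?w \<and> ?w \<le> 1 \<and> x $ i * ?w \<le> v S \<and> v S - x $ i * ?w \<le> ?s - (if i \<in> S then x $ i else 0)"
  proof (cases "i \<in> S")
    case False
    then show ?thesis using v vs by (simp add: veto_component_def)
  next
    case True
    have xs: "x $ i \<le> ?s"
      using core_sum_mono[OF assms(2), of "{i}" S] assms(1) True unfolding BGplus_def by auto
    with assms(3) have s: "0 < ?s" by linarith
    have "x $ i * v S \<le> ?s * v S"
      using xs v by (rule mult_right_mono)
    then have "x $ i * (v S / ?s) \<le> v S"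
      using s by (simp add: field_simps)
    moreover have "v S - x $ i * (v S / ?s) = v S * (?s - x $ i) / ?s"
      using s by (simp add: field_simps)
    moreover have "v S * (?s - x $ i) \<le> (?s - x $ i) * ?s"
      using vs xs by (subst mult.commute) (intro mult_right_mono, auto)
    ultimately show ?thesis
      using True v vs s by (simp add: veto_component_def pos_divide_le_eq)
  qed
  then show "0 \<le> ?w" "?w \<le> 1" "x $ i * ?w \<le> v S" "v S - x $ i * ?w \<le> ?s - (if i \<in> S then x $ i else 0)"
    by auto
qed

lemma veto_component_in_BGplus:
  assumes "v \<in> BGplus" "x \<in> core v" "0 < x $ i"
  shows "veto_component v x i \<in> BGplus"
proof (rule veto_game_in_BGplus)
  show "is_game (veto_component v x i)"
    by (simp add: is_game_def veto_component_def)
  show "\<forall>S. 0 \<le> veto_component v x i S \<and> veto_component v x i S \<le> 1"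
    using veto_component_bounds(1,2)[OF assms] by blast
  show "veto_component v x i UNIV = 1"
    using assms(1) core_sum_UNIV[OF assms(2)] unfolding BGplus_def by (simp add: veto_component_def)
  show "veto_player (veto_component v x i) i"
    by (simp add: veto_player_def veto_component_def)
qed

lemma residual_game_in_BGplus:
  fixes v :: "'n::finite set \<Rightarrow> real"
  assumes "v \<in> BGplus" "x \<in> core v" "0 < x $ i" "x $ i < 1"
  shows "residual_game v x i \<in> BGplus"
proof -
  let ?u = "residual_game v x i"
  have v: "v {} = 0" "v UNIV = 1" using assms(1) unfolding BGplus_def is_game_def by auto
  have w: "veto_component v x i {} = 0" "veto_component v x i UNIV = 1"
    using assms(1,2) veto_component_in_BGplus[OF assms(1-3)] unfolding BGplus_def is_game_def
    by (auto simp: veto_component_def)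
  define y :: "real ^ 'n" where "y = (\<chi> j. (x $ j - x $ i * axis i 1 $ j) / (1 - x $ i))"
  have sum_y: "(\<Sum>j\<in>S. y $ j) = ((\<Sum>j\<in>S. x $ j) - (if i \<in> S then x $ i else 0)) / (1 - x $ i)" for S
    by (simp add: y_def sum_subtractf sum_axis flip: sum_divide_distrib sum_distrib_left)
  have "y \<in> core ?u"
    unfolding core_def
  proof (intro CollectI conjI allI)
    show "?u S \<le> (\<Sum>j\<in>S. y $ j)" for S
      unfolding sum_y residual_game_def using veto_component_bounds(4)[OF assms(1-3)] assms(4)
      by (intro divide_right_mono) auto
    show "(\<Sum>j\<in>UNIV. y $ j) = ?u UNIV"
      unfolding sum_y residual_game_def using core_sum_UNIV[OF assms(2)] v w by simp
  qed
  moreover have "0 \<le> ?u S" for S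
    using veto_component_bounds(3)[OF assms(1-3)] assms(4) by (simp add: residual_game_def)
  ultimately show ?thesis
    using v w assms(4) by (auto simp: BGplus_def is_game_def residual_game_def)
qed

lemma vertex_veto_player_of_core:
  assumes "vertex_BGplus v" "x \<in> core v" "0 < x $ i"
  shows "veto_player v i"
proof (cases "x $ i < 1")
  case True
  have v: "v \<in> BGplus" using assms(1) unfolding vertex_BGplus_def by blast
  let ?w = "veto_component v x i"
  have split: "v = (\<lambda>S. (1 - x $ i) * residual_game v x i S + x $ i * ?w S)"
    using True by (auto simp: residual_game_def)
  have "residual_game v x i = ?w"
    using vertex_BGplus_convex_combination[OF assms(1) residual_game_in_BGplus[OF v assms(2,3) True]
        veto_component_in_BGplus[OF v assms(2,3)] assms(3) True split] .
  with split have v_eq: "v S = ?w S" for S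
    by (simp add: fun_eq_iff algebra_simps)
  show ?thesis
    unfolding veto_player_def
  proof (intro allI impI)
    fix S assume "i \<notin> S"
    with v_eq[of S] show "v S = 0" by (simp add: veto_component_def)
  qed
next
  case False
  have v: "\<forall>S. 0 \<le> v S" "v UNIV = 1" using assms(1) unfolding vertex_BGplus_def BGplus_def by auto
  show ?thesis
    unfolding veto_player_def
  proof (intro allI impI)
    fix S assume "i \<notin> S"
    then show "v S = 0"
      using core_add_sum_le[OF assms(2) v(1) \<open>i \<notin> S\<close>] core_le_sum[OF assms(2), of S]
        v(1)[rule_format, of S] v(2) False
      by linarith
  qed
qed

lemma vertex_has_veto_player:
  assumes "vertex_BGplus v"
  obtains i where "veto_player v i"
proof -
  have v: "v \<in> BGplus" using assms unfolding vertex_BGplus_def by blast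
  then obtain x where x: "x \<in> core v" unfolding BGplus_def by blast
  have "(\<Sum>j\<in>UNIV. x $ j) \<noteq> 0" using core_sum_UNIV[OF x] v unfolding BGplus_def by simp
  then obtain i where "x $ i \<noteq> 0" by (meson sum.neutral)
  moreover have "0 \<le> x $ i" using core_nonneg[OF x] v unfolding BGplus_def by blast
  ultimately have "0 < x $ i" by simp
  then show ?thesis using that vertex_veto_player_of_core[OF assms x] by blast
qed

lemma vertex_zero_one:
  assumes "vertex_BGplus v"
  shows "v S = 0 \<or> v S = 1"
proof (rule ccontr)
  assume "\<not> (v S = 0 \<or> v S = 1)"
  moreover have v: "v \<in> BGplus" using assms unfolding vertex_BGplus_def by blast
  ultimately have S: "0 < v S" "v S < 1"
    using BGplus_le_1[OF v, of S] unfolding BGplus_def by (auto simp: less_le)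
  obtain i where i: "veto_player v i" using vertex_has_veto_player[OF assms] .
  with S have "i \<in> S" unfolding veto_player_def by auto
  define e where "e = min (v S) (1 - v S)"
  have e: "0 < e" "e \<le> v S" "e \<le> 1 - v S" using S unfolding e_def by auto
  have perturbed: "v(S := v S + d) \<in> BGplus" if "\<bar>d\<bar> \<le> e" for d
  proof (rule veto_game_in_BGplus)
    show "is_game (v(S := v S + d))" "(v(S := v S + d)) UNIV = 1"
      using v S that e unfolding BGplus_def is_game_def by auto
    show "\<forall>T. 0 \<le> (v(S := v S + d)) T \<and> (v(S := v S + d)) T \<le> 1"
      using v BGplus_le_1[OF v] that e unfolding BGplus_def by auto
    show "veto_player (v(S := v S + d)) i"
      using i \<open>i \<in> S\<close> unfolding veto_player_def by auto
  qed
  have down: "v(S := v S - e) \<in> BGplus" and up: "v(S := v S + e) \<in> BGplus"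
    using perturbed[of "-e"] perturbed[of e] e by simp_all
  have "v = (\<lambda>T. (1 - 1/2) * (v(S := v S - e)) T + 1/2 * (v(S := v S + e)) T)"
    by (auto simp: fun_eq_iff field_simps)
  then have "v(S := v S - e) = v(S := v S + e)"
    by (rule vertex_BGplus_convex_combination[OF assms down up, rotated -1]) simp_all
  then have "v S - e = v S + e" by (metis fun_upd_same)
  with e show False by simp
qed

lemma core_zero_one_game:
  assumes "is_game v" "v UNIV = 1" "\<forall>S. v S = 0 \<or> v S = 1"
  shows "core v = {x. (\<forall>i. 0 \<le> x $ i) \<and> (\<forall>i. i \<notin> \<Inter> (assoc_coll v) \<longrightarrow> x $ i = 0)
                    \<and> (\<Sum>i\<in>UNIV. x $ i) = 1}"
  (is "_ = ?face")
proof
  have v_nonneg: "\<forall>S. 0 \<le> v S" using assms(3) by (metis order_refl zero_le_one)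
  show "core v \<subseteq> ?face"
  proof (intro subsetI CollectI conjI allI impI)
    fix x i assume x: "x \<in> core v"
    show "0 \<le> x $ i" using core_nonneg[OF x] v_nonneg by blast
    show "(\<Sum>i\<in>UNIV. x $ i) = 1" using core_sum_UNIV[OF x] assms(2) by simp
    assume "i \<notin> \<Inter> (assoc_coll v)"
    then obtain S where "S \<in> assoc_coll v" "i \<notin> S" by blast
    then show "x $ i = 0"
      using core_add_sum_le[OF x v_nonneg, of i S] core_le_sum[OF x, of S]
        core_nonneg[OF x, of i] v_nonneg assms(2)
      unfolding assoc_coll_def by fastforce
  qed
next
  show "?face \<subseteq> core v"
    unfolding core_def
  proof (intro subsetI CollectI conjI allI)
    fix x S assume x: "x \<in> ?face"
    show "v S \<le> (\<Sum>i\<in>S. x $ i)"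
    proof (cases "v S = 1 \<and> S \<noteq> UNIV")
      case True
      then have "S \<in> assoc_coll v"
        using assms(1) unfolding assoc_coll_def is_game_def by auto
      then have "\<Inter> (assoc_coll v) \<subseteq> S" by blast
      then have "(\<Sum>i\<in>S. x $ i) = (\<Sum>i\<in>UNIV. x $ i)"
        using x by (intro sum.mono_neutral_left) auto
      then show ?thesis using x True by simp
    next
      case False
      with assms(3) have "S = UNIV \<or> v S = 0" by blast
      then show ?thesis using x assms(2) by (auto simp: sum_nonneg)
    qed
  next
    fix x assume "x \<in> ?face"
    then show "(\<Sum>i\<in>UNIV. x $ i) = v UNIV" using assms(2) by simp
  qed
qed

lemma zero_one_game_eq_unanimity_N:
  assumes "is_game v" "v UNIV = 1" "\<forall>S. v S = 0 \<or> v S = 1" "assoc_coll v = {}"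
  shows "v = unanimity_N"
proof
  fix S
  have "v S \<noteq> 1" if "S \<noteq> UNIV"
  proof
    assume "v S = 1"
    with that assms(1) have "S \<in> assoc_coll v"
      unfolding assoc_coll_def is_game_def by force
    with assms(4) show False by simp
  qed
  then show "v S = unanimity_N S"
    using assms(2,3) unfolding unanimity_N_def by metis
qed

theorem proposition2:
  fixes v :: "'n::finite set \<Rightarrow> real"
  assumes "vertex_BGplus v"
  shows "(assoc_coll v \<noteq> {} \<longrightarrow>
            core v = convex hull {axis i 1 | i. i \<in> \<Inter> (assoc_coll v)} \<and>
            aff_dim (core v) = int (card (\<Inter> (assoc_coll v))) - 1)
       \<and> (assoc_coll v = {} \<longrightarrow>
            v = unanimity_N \<and>
            core v = {x. (\<forall>i. x $ i \<ge> 0) \<and> (\<Sum>i\<in>UNIV. x $ i) = 1})"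
proof -
  have game: "is_game v" "v UNIV = 1"
    using assms unfolding vertex_BGplus_def BGplus_def by auto
  have zero_one: "\<forall>S. v S = 0 \<or> v S = 1" using vertex_zero_one[OF assms] by blast
  note core = core_zero_one_game[OF game zero_one]
  show ?thesis
  proof (intro conjI impI)
    show hull: "core v = convex hull {axis i 1 | i. i \<in> \<Inter> (assoc_coll v)}"
      unfolding core convex_hull_axes ..
    show "aff_dim (core v) = int (card (\<Inter> (assoc_coll v))) - 1"
      unfolding hull aff_dim_convex_hull_axes ..
  next
    assume "assoc_coll v = {}"
    then show "v = unanimity_N"
      by (rule zero_one_game_eq_unanimity_N[OF game zero_one])
    show "core v = {x. (\<forall>i. x $ i \<ge> 0) \<and> (\<Sum>i\<in>UNIV. x $ i) = 1}"
      unfolding core \<open>assoc_coll v = {}\<close> by simp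
  qed
qed

end
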